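(* Let $u_x$ be the value at a point $x$ of a curvature-type tensor on a Hermitian manifold $(M,g,J)$ with $u_x\ge0$, and suppose $u_x(\xi,\bar\xi,\eta,\bar\eta)=0$ for some $\xi,\eta\in T^{1,0}_xM$. Let $e_1,\dots,e_n$ be an orthonormal basis of $T^{1,0}_xM$. Then $$\sum_{i,j}\Big(u_x(\xi,\bar\xi,e_i,\bar e_j)u_x(e_j,\bar e_i,\eta,\bar\eta)-u_x(\xi,\bar e_i,\eta,\bar e_j)u_x(e_j,\bar\xi,e_i,\bar\eta)\Big)\ge0.$$
   Context: A Hermitian metric $g$ on a complex manifold $(M,J)$ is a $J$-invariant Riemannian metric extended complex-bilinearly to $T_{\mathbb C}M=T^{1,0}M\oplus T^{0,1}M$; orthonormality of $e_i$ is with respect to the Hermitian inner product $g(\cdot,\bar\cdot)$ on $T^{1,0}_xM$. A real tensor $u\in(T^*M)^{\otimes4}$ is of curvature type if $u(X,Y,Z,W)=-u(Y,X,Z,W)=-u(X,Y,W,Z)$ and $u(JX,JY,Z,W)=u(X,Y,JZ,JW)=u(X,Y,Z,W)$; it is extended complex-multilinearly. $u_x\ge0$ means $u_x(\xi,\bar\xi,\eta,\bar\eta)\ge0$ for all $\xi,\eta\in T^{1,0}_xM$. *)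

theory Defs
  imports "HOL-Analysis.Analysis" "HOL-Library.Complex_Order"
begin

text \<open>A point x of the manifold is fixed; the real tangent space T_xM is modelled by a
finite-dimensional real vector space 'v.  Complexified vectors X + iY are pairs (X, Y).\<close>

type_synonym 'v cvec = "'v \<times> 'v"

definition cscale :: "complex \<Rightarrow> 'v::real_vector cvec \<Rightarrow> 'v cvec" where
  "cscale c A = (Re c *\<^sub>R fst A - Im c *\<^sub>R snd A, Re c *\<^sub>R snd A + Im c *\<^sub>R fst A)"

definition cconj :: "'v::real_vector cvec \<Rightarrow> 'v cvec" where
  "cconj A = (fst A, - snd A)"

definition cext :: "('v \<Rightarrow> complex) \<Rightarrow> 'v cvec \<Rightarrow> complex" where
  "cext f A = f (fst A) + \<i> * f (snd A)"

definition cext2 :: "('v \<Rightarrow> 'v \<Rightarrow> real) \<Rightarrow> 'v cvec \<Rightarrow> 'v cvec \<Rightarrow> complex" where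
  "cext2 g A B = cext (\<lambda>a. cext (\<lambda>b. complex_of_real (g a b)) B) A"

definition cext4 :: "('v \<Rightarrow> 'v \<Rightarrow> 'v \<Rightarrow> 'v \<Rightarrow> real) \<Rightarrow> 'v cvec \<Rightarrow> 'v cvec \<Rightarrow> 'v cvec \<Rightarrow> 'v cvec \<Rightarrow> complex" where
  "cext4 u A B C D =
     cext (\<lambda>a. cext (\<lambda>b. cext (\<lambda>c. cext (\<lambda>d. complex_of_real (u a b c d)) D) C) B) A"

definition cJ :: "('v \<Rightarrow> 'v) \<Rightarrow> 'v cvec \<Rightarrow> 'v cvec" where
  "cJ J A = (J (fst A), J (snd A))"

definition T10 :: "('v::real_vector \<Rightarrow> 'v) \<Rightarrow> 'v cvec set" where
  "T10 J = {A. cJ J A = cscale \<i> A}"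

definition complex_structure :: "('v::real_vector \<Rightarrow> 'v) \<Rightarrow> bool" where
  "complex_structure J \<longleftrightarrow> linear J \<and> (\<forall>X. J (J X) = - X)"

definition hermitian_metric :: "('v::real_vector \<Rightarrow> 'v) \<Rightarrow> ('v \<Rightarrow> 'v \<Rightarrow> real) \<Rightarrow> bool" where
  "hermitian_metric J g \<longleftrightarrow>
     (\<forall>Y. linear (\<lambda>X. g X Y)) \<and> (\<forall>X Y. g X Y = g Y X) \<and> (\<forall>X. X \<noteq> 0 \<longrightarrow> g X X > 0)
     \<and> (\<forall>X Y. g (J X) (J Y) = g X Y)"

definition curvature_type :: "('v::real_vector \<Rightarrow> 'v) \<Rightarrow> ('v \<Rightarrow> 'v \<Rightarrow> 'v \<Rightarrow> 'v \<Rightarrow> real) \<Rightarrow> bool" where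
  "curvature_type J u \<longleftrightarrow>
     (\<forall>Y Z W. linear (\<lambda>X. u X Y Z W)) \<and> (\<forall>X Z W. linear (\<lambda>Y. u X Y Z W)) \<and>
     (\<forall>X Y W. linear (\<lambda>Z. u X Y Z W)) \<and> (\<forall>X Y Z. linear (\<lambda>W. u X Y Z W)) \<and>
     (\<forall>X Y Z W. u X Y Z W = - u Y X Z W) \<and> (\<forall>X Y Z W. u X Y Z W = - u X Y W Z) \<and>
     (\<forall>X Y Z W. u (J X) (J Y) Z W = u X Y Z W) \<and> (\<forall>X Y Z W. u X Y (J Z) (J W) = u X Y Z W)"

definition nonneg_tensor :: "('v::real_vector \<Rightarrow> 'v) \<Rightarrow> ('v \<Rightarrow> 'v \<Rightarrow> 'v \<Rightarrow> 'v \<Rightarrow> real) \<Rightarrow> bool" where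
  "nonneg_tensor J u \<longleftrightarrow>
     (\<forall>\<xi>\<in>T10 J. \<forall>\<eta>\<in>T10 J. cext4 u \<xi> (cconj \<xi>) \<eta> (cconj \<eta>) \<ge> 0)"

definition orthonormal_basis_T10 ::
  "('v::real_vector \<Rightarrow> 'v) \<Rightarrow> ('v \<Rightarrow> 'v \<Rightarrow> real) \<Rightarrow> nat \<Rightarrow> (nat \<Rightarrow> 'v cvec) \<Rightarrow> bool" where
  "orthonormal_basis_T10 J g n e \<longleftrightarrow>
     (\<forall>i<n. e i \<in> T10 J) \<and>
     (\<forall>i<n. \<forall>j<n. cext2 g (e i) (cconj (e j)) = (if i = j then 1 else 0)) \<and>
     (\<forall>\<xi>\<in>T10 J. \<exists>c. \<xi> = (\<Sum>i<n. cscale (c i) (e i)))"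

end

theory Submission
  imports Defs
begin

text \<open>
  At a zero \<open>(\<xi>, \<eta>)\<close> of the nonnegative function \<open>(A, B) \<mapsto> u(A, conj A, B, conj B)\<close> on
  \<open>T\<^sup>1\<^sup>,\<^sup>0 \<times> T\<^sup>1\<^sup>,\<^sup>0\<close>, the second variation in every direction is nonnegative, and so is its
  Hermitian part, obtained by averaging over \<open>(A, B)\<close> and \<open>(-i A, i B)\<close>. In the basis \<open>e\<close> this
  Hermitian part is the quadratic form of a positive semidefinite \<open>2n \<times> 2n\<close> block matrix \<open>M\<close>
  whose entries are exactly the four factors in the sum. Writing \<open>M = \<Sum>\<^sub>r v\<^sub>r v\<^sub>r\<^sup>*\<close>
  (Cholesky), with \<open>v\<^sub>r = (a\<^sub>r, b\<^sub>r)\<close> split along the two blocks, the sum becomes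
  \<open>\<Sum>\<^sub>r\<^sub>,\<^sub>s (\<bar>p\<^sub>r\<^sub>s\<bar>\<^sup>2 - p\<^sub>r\<^sub>s conj p\<^sub>s\<^sub>r) = \<onehalf> \<Sum>\<^sub>r\<^sub>,\<^sub>s \<bar>p\<^sub>r\<^sub>s - p\<^sub>s\<^sub>r\<bar>\<^sup>2\<close>
  with \<open>p\<^sub>r\<^sub>s = \<Sum>\<^sub>j b\<^sub>r\<^sub>j a\<^sub>s\<^sub>j\<close>.
\<close>

lemma cext4_cscale_first:
  assumes "\<And>Y Z W. linear (\<lambda>X. u X Y Z W)"
  shows "cext4 u (cscale c A) B C D = c * cext4 u A B C D"
proof -
  have lin: "u (x - y) Y Z W = u x Y Z W - u y Y Z W" "u (x + y) Y Z W = u x Y Z W + u y Y Z W"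
    "u (r *\<^sub>R x) Y Z W = r * u x Y Z W" for x y r Y Z W
    using linear_diff[OF assms] linear_add[OF assms] linear_scale[OF assms] by simp_all
  show ?thesis
    apply (subst (2) complex_eq)
    apply (simp add: cext4_def cext_def cscale_def lin)
    apply (simp add: complex_eq_iff algebra_simps)
    done
qed

lemma cext4_swap12: "cext4 u A B C D = cext4 (\<lambda>b a c d. u a b c d) B A C D"
  and cext4_swap13: "cext4 u A B C D = cext4 (\<lambda>c b a d. u a b c d) C B A D"
  and cext4_swap14: "cext4 u A B C D = cext4 (\<lambda>d b c a. u a b c d) D B C A"
  and cext4_swap34: "cext4 u A B C D = cext4 (\<lambda>a b d c. u a b c d) A B D C"
  by (simp_all add: cext4_def cext_def algebra_simps)

context
  fixes J :: "'v::real_vector \<Rightarrow> 'v" and u :: "'v \<Rightarrow> 'v \<Rightarrow> 'v \<Rightarrow> 'v \<Rightarrow> real"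
  assumes curv: "curvature_type J u"
begin

lemma curvature_type_linear:
  "linear (\<lambda>X. u X Y Z W)" "linear (\<lambda>Y. u X Y Z W)"
  "linear (\<lambda>Z. u X Y Z W)" "linear (\<lambda>W. u X Y Z W)"
  using curv[unfolded curvature_type_def] by meson+

lemma cext4_add:
  "cext4 u (A + A') B C D = cext4 u A B C D + cext4 u A' B C D"
  "cext4 u A (B + B') C D = cext4 u A B C D + cext4 u A B' C D"
  "cext4 u A B (C + C') D = cext4 u A B C D + cext4 u A B C' D"
  "cext4 u A B C (D + D') = cext4 u A B C D + cext4 u A B C D'"
  by (simp_all add: cext4_def cext_def algebra_simps
      linear_add[OF curvature_type_linear(1)] linear_add[OF curvature_type_linear(2)]
      linear_add[OF curvature_type_linear(3)] linear_add[OF curvature_type_linear(4)])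

lemma cext4_cscale:
  "cext4 u (cscale c A) B C D = c * cext4 u A B C D"
  "cext4 u A (cscale c B) C D = c * cext4 u A B C D"
  "cext4 u A B (cscale c C) D = c * cext4 u A B C D"
  "cext4 u A B C (cscale c D) = c * cext4 u A B C D"
proof -
  have "cext4 (\<lambda>b a c d. u a b c d) (cscale c B) A C D = c * cext4 (\<lambda>b a c d. u a b c d) B A C D"
    "cext4 (\<lambda>c b a d. u a b c d) (cscale c C) B A D = c * cext4 (\<lambda>c b a d. u a b c d) C B A D"
    "cext4 (\<lambda>d b c a. u a b c d) (cscale c D) B C A = c * cext4 (\<lambda>d b c a. u a b c d) D B C A"
    by (rule cext4_cscale_first, rule curvature_type_linear)+
  then show "cext4 u A (cscale c B) C D = c * cext4 u A B C D"
    "cext4 u A B (cscale c C) D = c * cext4 u A B C D"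
    "cext4 u A B C (cscale c D) = c * cext4 u A B C D"
    by (simp only: cext4_swap12[of u _ _ C D], simp only: cext4_swap13[of u A B _ D],
        simp only: cext4_swap14[of u A B C])
qed (rule cext4_cscale_first[OF curvature_type_linear(1)])

lemma cext4_zero:
  "cext4 u 0 B C D = 0" "cext4 u A 0 C D = 0" "cext4 u A B 0 D = 0" "cext4 u A B C 0 = 0"
  using cext4_cscale[where c=0 and A=0] cext4_cscale[where c=0 and B=0]
    cext4_cscale[where c=0 and C=0] cext4_cscale[where c=0 and D=0]
  by (simp_all add: cscale_def zero_prod_def)

lemma cext4_sum:
  "cext4 u (\<Sum>i\<in>S. f i) B C D = (\<Sum>i\<in>S. cext4 u (f i) B C D)"
  "cext4 u A (\<Sum>i\<in>S. f i) C D = (\<Sum>i\<in>S. cext4 u A (f i) C D)"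
  "cext4 u A B (\<Sum>i\<in>S. f i) D = (\<Sum>i\<in>S. cext4 u A B (f i) D)"
  "cext4 u A B C (\<Sum>i\<in>S. f i) = (\<Sum>i\<in>S. cext4 u A B C (f i))"
  by (induction S rule: infinite_finite_induct, simp_all add: cext4_zero cext4_add)+

lemma curvature_type_antisym: "u X Y Z W = - u Y X Z W" "u X Y Z W = - u X Y W Z"
  using curv[unfolded curvature_type_def] by meson+

lemma cext4_swap_pairs: "cext4 u A B C D = cext4 u B A D C"
proof -
  have "(\<lambda>b a d c. u a b c d) = u"
    by (intro ext) (metis curvature_type_antisym minus_minus)
  then show ?thesis
    using cext4_swap12[of u] cext4_swap34[of "\<lambda>b a c d. u a b c d"] by metis
qed

lemma cnj_cext4: "cnj (cext4 u A B C D) = cext4 u (cconj A) (cconj B) (cconj C) (cconj D)"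
proof -
  have "u (- a) b c d = - u a b c d" "u a (- b) c d = - u a b c d"
    "u a b (- c) d = - u a b c d" "u a b c (- d) = - u a b c d" for a b c d
    using linear_neg[OF curvature_type_linear(1)] linear_neg[OF curvature_type_linear(2)]
      linear_neg[OF curvature_type_linear(3)] linear_neg[OF curvature_type_linear(4)] by simp_all
  then show ?thesis
    by (simp add: cext4_def cext_def cconj_def complex_eq_iff)
qed

end

lemma cconj_add: "cconj (A + B) = cconj A + cconj B"
  by (simp add: cconj_def)

lemma cconj_cscale: "cconj (cscale c A) = cscale (cnj c) (cconj A)"
  by (simp add: cconj_def cscale_def)

lemma cconj_zero: "cconj 0 = 0"
  by (simp add: cconj_def zero_prod_def)

lemma cconj_sum: "cconj (\<Sum>i\<in>S. f i) = (\<Sum>i\<in>S. cconj (f i))"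
  by (induction S rule: infinite_finite_induct) (simp_all add: cconj_add cconj_zero)

lemma cconj_cconj [simp]: "cconj (cconj A) = A"
  by (simp add: cconj_def)

context
  fixes J :: "'v::real_vector \<Rightarrow> 'v"
  assumes cs: "complex_structure J"
begin

lemma T10_add: "A \<in> T10 J \<Longrightarrow> B \<in> T10 J \<Longrightarrow> A + B \<in> T10 J"
  using cs by (auto simp: complex_structure_def T10_def cJ_def cscale_def linear_add prod_eq_iff)

lemma T10_cscale: "A \<in> T10 J \<Longrightarrow> cscale c A \<in> T10 J"
  using cs by (auto simp: complex_structure_def T10_def cJ_def cscale_def
      linear_add linear_diff linear_scale prod_eq_iff)

lemma T10_zero: "0 \<in> T10 J"
  using cs by (simp add: complex_structure_def T10_def cJ_def cscale_def linear_0 zero_prod_def)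

lemma T10_sum: "(\<And>i. i \<in> S \<Longrightarrow> f i \<in> T10 J) \<Longrightarrow> (\<Sum>i\<in>S. f i) \<in> T10 J"
  by (induction S rule: infinite_finite_induct) (simp_all add: T10_zero T10_add)

end

definition quad_form :: "'i set \<Rightarrow> ('i \<Rightarrow> 'i \<Rightarrow> complex) \<Rightarrow> ('i \<Rightarrow> complex) \<Rightarrow> complex" where
  "quad_form I M z = (\<Sum>a\<in>I. \<Sum>c\<in>I. cnj (z a) * M a c * z c)"

definition psd_on :: "'i set \<Rightarrow> ('i \<Rightarrow> 'i \<Rightarrow> complex) \<Rightarrow> bool" where
  "psd_on I M \<longleftrightarrow> (\<forall>a\<in>I. \<forall>c\<in>I. M c a = cnj (M a c)) \<and> (\<forall>z. 0 \<le> Re (quad_form I M z))"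

lemma quad_form_shift:
  assumes "finite I" "a0 \<in> I"
  shows "quad_form I M (\<lambda>c. z c - (if c = a0 then t else 0)) =
    quad_form I M z - (\<Sum>a\<in>I. cnj (z a) * M a a0) * t - cnj t * (\<Sum>c\<in>I. M a0 c * z c)
      + cnj t * M a0 a0 * t"
proof -
  have row: "(\<Sum>c\<in>I. M a c * (z c - (if c = a0 then t else 0))) = (\<Sum>c\<in>I. M a c * z c) - M a a0 * t" for a
    using assms by (simp add: right_diff_distrib sum_subtractf if_distrib[where f="\<lambda>x. M a _ * x"] cong: if_cong)
  have sum_if_const: "(\<Sum>c\<in>I. if P then g c else 0) = (if P then sum g I else (0::complex))" for P g
    by simp
  have "quad_form I M (\<lambda>c. z c - (if c = a0 then t else 0)) =
    (\<Sum>a\<in>I. (cnj (z a) - (if a = a0 then cnj t else 0)) * ((\<Sum>c\<in>I. M a c * z c) - M a a0 * t))"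
    unfolding quad_form_def row[symmetric] by (simp add: sum_distrib_left mult.assoc if_distrib[where f=cnj] cong: if_cong)
  also have "\<dots> = quad_form I M z - (\<Sum>a\<in>I. cnj (z a) * M a a0) * t - cnj t * (\<Sum>c\<in>I. M a0 c * z c)
      + cnj t * M a0 a0 * t"
    using assms by (simp add: quad_form_def left_diff_distrib right_diff_distrib sum_subtractf sum_if_const
        sum_distrib_left sum_distrib_right mult.assoc if_distrib[where f="\<lambda>x. x * _"] cong: if_cong)
  finally show ?thesis .
qed

lemma psd_on_diag:
  assumes "psd_on I M" "finite I" "a \<in> I"
  shows "M a a = of_real (Re (M a a))" "0 \<le> Re (M a a)"
proof -
  have "M a a = cnj (M a a)"
    using assms unfolding psd_on_def by blast
  then show "M a a = of_real (Re (M a a))"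
    by (simp add: complex_eq_iff)
  have "quad_form I M (\<lambda>c. 0 - (if c = a then 1 else 0)) = M a a"
    using quad_form_shift[OF assms(2,3), of M "\<lambda>_. 0" 1] by (simp add: quad_form_def)
  then show "0 \<le> Re (M a a)"
    using assms(1) unfolding psd_on_def by metis
qed

lemma psd_on_zero_diag_imp_zero_row:
  assumes psd: "psd_on I M" and "finite I" "a0 \<in> I" "c \<in> I" and zero: "M a0 a0 = 0"
  shows "M a0 c = 0"
proof (rule ccontr)
  define w where "w = M a0 c"
  assume "M a0 c \<noteq> 0"
  then have w_pos: "0 < (cmod w)\<^sup>2"
    by (simp add: w_def)
  text \<open>Moving the unit vector at \<open>c\<close> along \<open>a0\<close> by \<open>s w\<close> changes the form by \<open>-2 s \<bar>w\<bar>\<^sup>2\<close>,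
    since \<open>M a0 a0 = 0\<close>; for large \<open>s\<close> it becomes negative.\<close>
  define z where "z a = (if a = c then 1 else 0 :: complex)" for a
  define K where "K = Re (quad_form I M z)"
  define s where "s = (\<bar>K\<bar> + 1) / (cmod w)\<^sup>2"
  have "(\<Sum>a\<in>I. cnj (z a) * M a a0) = M c a0" "(\<Sum>b\<in>I. M a0 b * z b) = w"
    using \<open>finite I\<close> \<open>c \<in> I\<close>
    by (simp_all add: z_def w_def if_distrib[of cnj] if_distrib[where f="\<lambda>x. x * _"]
        if_distrib[where f="\<lambda>x. _ * x"] cong: if_cong)
  moreover have "M c a0 = cnj w"
    using psd \<open>a0 \<in> I\<close> \<open>c \<in> I\<close> unfolding psd_on_def w_def by blast
  ultimately have "quad_form I M (\<lambda>a. z a - (if a = a0 then of_real s * w else 0)) =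
      quad_form I M z - 2 * of_real s * (w * cnj w)"
    using quad_form_shift[OF assms(2,3), of M z "of_real s * w"] by (simp add: zero algebra_simps)
  also have "w * cnj w = of_real ((cmod w)\<^sup>2)"
    by (rule complex_norm_square[symmetric])
  finally have "Re (quad_form I M (\<lambda>a. z a - (if a = a0 then of_real s * w else 0))) = K - 2 * (\<bar>K\<bar> + 1)"
    using w_pos by (simp add: K_def s_def)
  moreover have "0 \<le> Re (quad_form I M (\<lambda>a. z a - (if a = a0 then of_real s * w else 0)))"
    using psd unfolding psd_on_def by blast
  ultimately have "0 \<le> K - 2 * (\<bar>K\<bar> + 1)"
    by simp
  then show False
    by (simp add: abs_if split: if_splits)
qed

lemma psd_on_schur_complement:
  assumes psd: "psd_on I M" and "finite I" "a0 \<in> I" and nonzero: "M a0 a0 \<noteq> 0"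
  shows "psd_on I (\<lambda>a c. M a c - M a a0 * M a0 c / M a0 a0)"
proof -
  define m where "m = M a0 a0"
  have herm: "M c a = cnj (M a c)" if "a \<in> I" "c \<in> I" for a c
    using psd that unfolding psd_on_def by blast
  have m_real: "cnj m = m"
    using psd_on_diag(1)[OF assms(1-3)] by (metis m_def complex_cnj_complex_of_real)
  have "0 \<le> Re (quad_form I (\<lambda>a c. M a c - M a a0 * M a0 c / m) z)" for z
  proof -
    define L where "L = (\<Sum>c\<in>I. M a0 c * z c)"
    have L_cnj: "(\<Sum>a\<in>I. cnj (z a) * M a a0) = cnj L"
      unfolding L_def cnj_sum complex_cnj_mult
      by (rule sum.cong) (use herm[OF \<open>a0 \<in> I\<close>] in \<open>auto simp: mult.commute\<close>)
    have "quad_form I (\<lambda>a c. M a c - M a a0 * M a0 c / m) z =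
        quad_form I M z - (\<Sum>a\<in>I. \<Sum>c\<in>I. (cnj (z a) * M a a0) * (M a0 c * z c) / m)"
      by (simp add: quad_form_def algebra_simps sum_subtractf)
    also have "\<dots> = quad_form I M z - cnj L * L / m"
      unfolding L_cnj[symmetric] by (simp add: L_def sum_product sum_divide_distrib)
    text \<open>Completing the square: the Schur complement is \<open>M\<close> evaluated at \<open>z\<close> shifted along \<open>a0\<close>.\<close>
    also have "\<dots> = quad_form I M z - cnj L * (L / m) - cnj (L / m) * L + cnj (L / m) * m * (L / m)"
      using nonzero m_real by (simp add: m_def field_simps)
    also have "\<dots> = quad_form I M (\<lambda>c. z c - (if c = a0 then L / m else 0))"
      unfolding quad_form_shift[OF assms(2,3)] L_cnj L_def[symmetric] m_def ..
    finally show ?thesis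
      using psd unfolding psd_on_def by metis
  qed
  moreover have "M c a - M c a0 * M a0 a / m = cnj (M a c - M a a0 * M a0 c / m)" if "a \<in> I" "c \<in> I" for a c
    using herm[OF that] herm[OF that(1) \<open>a0 \<in> I\<close>] herm[OF \<open>a0 \<in> I\<close> that(2)] m_real
    by (simp add: mult.commute)
  ultimately show ?thesis
    unfolding psd_on_def m_def by blast
qed

lemma psd_on_gram_decomposition_supported:
  assumes "finite I" "finite S" "psd_on I M" "\<forall>a\<in>I. \<forall>c\<in>I. a \<notin> S \<or> c \<notin> S \<longrightarrow> M a c = 0"
  shows "\<exists>(k::nat) v. \<forall>a\<in>I. \<forall>c\<in>I. M a c = (\<Sum>r<k. v r a * cnj (v r c))"
  using assms(2-)
proof (induction S arbitrary: M rule: finite_induct)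
  case empty
  then have "\<forall>a\<in>I. \<forall>c\<in>I. M a c = (\<Sum>r<(0::nat). v r a * cnj (v r c))" for v
    by simp
  then show ?case
    by blast
next
  case (insert a0 S)
  show ?case
  proof (cases "a0 \<in> I \<and> M a0 a0 \<noteq> 0")
    case False
    have row: "M a0 b = 0" "M b a0 = 0" if "a0 \<in> I" "b \<in> I" for b
    proof -
      show "M a0 b = 0"
        using False psd_on_zero_diag_imp_zero_row[OF insert.prems(1) assms(1) that] that(1) by blast
      then show "M b a0 = 0"
        using insert.prems(1) that unfolding psd_on_def by (metis complex_cnj_zero)
    qed
    have "\<forall>a\<in>I. \<forall>c\<in>I. a \<notin> S \<or> c \<notin> S \<longrightarrow> M a c = 0"
      using insert.prems(2) row by (metis insert_iff)
    then show ?thesis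
      using insert.IH insert.prems(1) by blast
  next
    case True
    then have "a0 \<in> I" "M a0 a0 \<noteq> 0"
      by auto
    text \<open>Cholesky step: \<open>M = w w\<^sup>* + M'\<close> with \<open>w = M(-, a0) / \<surd>m\<close> and the Schur complement
      \<open>M'\<close>, which vanishes outside \<open>S\<close>.\<close>
    define m where "m = M a0 a0"
    define M' where "M' a c = M a c - M a a0 * M a0 c / m" for a c
    have "psd_on I M'"
      unfolding M'_def m_def using psd_on_schur_complement[OF insert.prems(1) assms(1)] True by blast
    moreover have "M' a c = 0" if "a \<in> I" "c \<in> I" "a \<notin> S \<or> c \<notin> S" for a c
    proof (cases "a = a0 \<or> c = a0")
      case True
      with \<open>M a0 a0 \<noteq> 0\<close> show ?thesis
        by (auto simp: M'_def m_def)
    next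
      case False
      then have "M a c = 0" "M a a0 = 0 \<or> M a0 c = 0"
        using insert.prems(2) that \<open>a0 \<in> I \<and> M a0 a0 \<noteq> 0\<close> by auto
      then show ?thesis
        by (auto simp: M'_def)
    qed
    ultimately obtain k :: nat and v where v: "\<forall>a\<in>I. \<forall>c\<in>I. M' a c = (\<Sum>r<k. v r a * cnj (v r c))"
      using insert.IH by blast
    define w where "w a = M a a0 / of_real (sqrt (Re m))" for a
    have m_real: "m = of_real (Re m)"
      using psd_on_diag(1)[OF insert.prems(1) assms(1) \<open>a0 \<in> I\<close>] by (simp add: m_def)
    have m_pos: "0 < Re m"
      using psd_on_diag(2)[OF insert.prems(1) assms(1) \<open>a0 \<in> I\<close>] m_real \<open>M a0 a0 \<noteq> 0\<close>
      unfolding m_def by (metis less_eq_real_def of_real_0)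
    have "w a * cnj (w c) = M a a0 * M a0 c / m" if "a \<in> I" "c \<in> I" for a c
    proof -
      have "cnj (M c a0) = M a0 c"
        using insert.prems(1) True that(2) unfolding psd_on_def by (metis complex_cnj_cnj)
      moreover have "of_real (sqrt (Re m)) * of_real (sqrt (Re m)) = m"
        using m_real m_pos by (metis of_real_mult real_sqrt_mult_self less_imp_le real_sqrt_abs2 abs_of_nonneg)
      ultimately show ?thesis
        by (simp add: w_def field_simps)
    qed
    then have "\<forall>a\<in>I. \<forall>c\<in>I. M a c = (\<Sum>r<Suc k. (v(k := w)) r a * cnj ((v(k := w)) r c))"
      using v by (simp add: M'_def diff_eq_eq)
    then show ?thesis
      by blast
  qed
qed

lemma psd_on_gram_decomposition:
  assumes "finite I" "psd_on I M"
  shows "\<exists>(k::nat) v. \<forall>a\<in>I. \<forall>c\<in>I. M a c = (\<Sum>r<k. v r a * cnj (v r c))"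
  using psd_on_gram_decomposition_supported[OF assms(1,1,2)] by blast

lemma gram_exchange_sum_nonneg:
  fixes x y :: "nat \<Rightarrow> nat \<Rightarrow> complex"
  shows "0 \<le> (\<Sum>i<n. \<Sum>j<n.
      (\<Sum>r<k. x r j * cnj (x r i)) * (\<Sum>s<k. y s j * cnj (y s i))
    - (\<Sum>r<k. x r j * cnj (y r i)) * (\<Sum>s<k. y s j * cnj (x s i)))"
proof -
  have sq_nonneg: "0 \<le> z * cnj z" for z :: complex
    by (simp add: complex_mult_cnj less_eq_complex_def)
  define p where "p r s = (\<Sum>j<n. x r j * y s j)" for r s
  have expand: "(\<Sum>i<n. \<Sum>j<n. (\<Sum>r<k. X r i j) * (\<Sum>s<k. Y s i j)) =
      (\<Sum>r<k. \<Sum>s<k. \<Sum>i<n. \<Sum>j<n. X r i j * Y s i j)" for X Y :: "nat \<Rightarrow> nat \<Rightarrow> nat \<Rightarrow> complex"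
    by (simp only: sum_product sum.swap[where A="{..<n}" and B="{..<k}"])
  have p_diag: "(\<Sum>i<n. \<Sum>j<n. x r j * cnj (x r i) * (y s j * cnj (y s i))) = p r s * cnj (p r s)" for r s
    by (simp add: p_def sum_product mult_ac) (rule sum.swap)
  have p_cross: "(\<Sum>i<n. \<Sum>j<n. x r j * cnj (y r i) * (y s j * cnj (x s i))) = p r s * cnj (p s r)" for r s
    by (simp add: p_def sum_product mult_ac) (rule sum.swap)
  have "(\<Sum>i<n. \<Sum>j<n.
      (\<Sum>r<k. x r j * cnj (x r i)) * (\<Sum>s<k. y s j * cnj (y s i))
    - (\<Sum>r<k. x r j * cnj (y r i)) * (\<Sum>s<k. y s j * cnj (x s i))) =
    (\<Sum>r<k. \<Sum>s<k. p r s * cnj (p r s)) - (\<Sum>r<k. \<Sum>s<k. p r s * cnj (p s r))"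
    by (simp only: sum_subtractf expand p_diag p_cross)
  also have "\<dots> = 1 / 2 * (\<Sum>r<k. \<Sum>s<k. (p r s - p s r) * cnj (p r s - p s r))"
    using sum.swap[of "\<lambda>r s. p s r * cnj (p s r)" "{..<k}" "{..<k}"]
      sum.swap[of "\<lambda>r s. p s r * cnj (p r s)" "{..<k}" "{..<k}"]
    by (simp add: algebra_simps sum_subtractf sum.distrib)
  also have "0 \<le> \<dots>"
    by (intro sq_nonneg sum_nonneg mult_nonneg_nonneg) (simp add: less_eq_complex_def)
  finally show ?thesis .
qed

lemma psd_on_block_exchange_nonneg:
  fixes M :: "bool \<times> nat \<Rightarrow> bool \<times> nat \<Rightarrow> complex"
  assumes "psd_on (UNIV \<times> {..<n}) M"
  shows "0 \<le> (\<Sum>i<n. \<Sum>j<n. M (False, j) (False, i) * M (True, j) (True, i)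
                          - M (False, j) (True, i) * M (True, j) (False, i))"
proof -
  obtain k :: nat and v where v: "\<forall>a\<in>UNIV \<times> {..<n}. \<forall>c\<in>UNIV \<times> {..<n}. M a c = (\<Sum>r<k. v r a * cnj (v r c))"
    using psd_on_gram_decomposition[OF _ assms] by auto
  have "(\<Sum>i<n. \<Sum>j<n. M (False, j) (False, i) * M (True, j) (True, i)
                       - M (False, j) (True, i) * M (True, j) (False, i)) =
    (\<Sum>i<n. \<Sum>j<n.
      (\<Sum>r<k. v r (False, j) * cnj (v r (False, i))) * (\<Sum>s<k. v s (True, j) * cnj (v s (True, i)))
    - (\<Sum>r<k. v r (False, j) * cnj (v r (True, i))) * (\<Sum>s<k. v s (True, j) * cnj (v s (False, i))))"
    using v by (intro sum.cong refl) auto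
  then show ?thesis
    using gram_exchange_sum_nonneg[where x="\<lambda>r j. v r (False, j)" and y="\<lambda>r j. v r (True, j)"] by simp
qed

lemma nonneg_quartic_imp_quadratic_coeff_nonneg:
  fixes b d :: real
  assumes "\<And>t. 0 \<le> b * t\<^sup>2 + d * t ^ 4"
  shows "0 \<le> b"
proof (rule ccontr)
  assume "\<not> 0 \<le> b"
  then have b: "b < 0" by simp
  define s where "s = - b / (\<bar>d\<bar> + 1)"
  have s: "0 < s" "s * \<bar>d\<bar> < - b"
    using b by (auto simp: s_def field_simps)
  have "d * s \<le> s * \<bar>d\<bar>"
    using mult_right_mono[OF abs_ge_self, of s d] s by (simp add: mult.commute)
  then have "b + d * s < 0"
    using s by linarith
  then have "s * (b + d * s) < 0"
    using s(1) by (simp add: mult_pos_neg)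
  moreover have "s * (b + d * s) = b * (sqrt s)\<^sup>2 + d * (sqrt s) ^ 4"
    using s by (simp add: algebra_simps power4_eq_xxxx)
  ultimately show False
    using assms[of "sqrt s"] by simp
qed

text \<open>Indices \<open>(True, i)\<close> carry the coordinates of a direction \<open>A\<close>, indices \<open>(False, i)\<close> those of
  a direction \<open>B\<close>; the Hermitian form of this matrix is the Hermitian part of the second variation of
  \<open>u(\<xi> + A, \<xi> + A, \<eta> + B, \<eta> + B)\<close>.\<close>
definition variation_matrix ::
  "('v::real_vector \<Rightarrow> 'v \<Rightarrow> 'v \<Rightarrow> 'v \<Rightarrow> real) \<Rightarrow> 'v cvec \<Rightarrow> 'v cvec \<Rightarrow> (nat \<Rightarrow> 'v cvec)
    \<Rightarrow> bool \<times> nat \<Rightarrow> bool \<times> nat \<Rightarrow> complex" where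
  "variation_matrix u \<xi> \<eta> e = (\<lambda>(b, i) (b', k).
     if b then (if b' then cext4 u (e i) (cconj (e k)) \<eta> (cconj \<eta>)
                else cext4 u (e i) (cconj \<xi>) (e k) (cconj \<eta>))
     else (if b' then cext4 u \<xi> (cconj (e k)) \<eta> (cconj (e i))
           else cext4 u \<xi> (cconj \<xi>) (e k) (cconj (e i))))"

context
  fixes J :: "'v::real_vector \<Rightarrow> 'v" and u :: "'v \<Rightarrow> 'v \<Rightarrow> 'v \<Rightarrow> 'v \<Rightarrow> real"
    and \<xi> \<eta> :: "'v cvec"
  assumes cs: "complex_structure J" and curv: "curvature_type J u" and nonneg: "nonneg_tensor J u"
    and \<xi>: "\<xi> \<in> T10 J" and \<eta>: "\<eta> \<in> T10 J"
    and vanishing: "cext4 u \<xi> (cconj \<xi>) \<eta> (cconj \<eta>) = 0"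
begin

lemma second_variation_nonneg:
  assumes A: "A \<in> T10 J" and B: "B \<in> T10 J"
  shows "0 \<le> Re (cext4 u A (cconj A) \<eta> (cconj \<eta>) + cext4 u \<xi> (cconj \<xi>) B (cconj B)
     + cext4 u A (cconj \<xi>) B (cconj \<eta>) + cext4 u A (cconj \<xi>) \<eta> (cconj B)
     + cext4 u \<xi> (cconj A) B (cconj \<eta>) + cext4 u \<xi> (cconj A) \<eta> (cconj B))"
    (is "0 \<le> Re ?c2")
proof -
  define f where "f t = cext4 u (\<xi> + cscale (of_real t) A) (cconj (\<xi> + cscale (of_real t) A))
     (\<eta> + cscale (of_real t) B) (cconj (\<eta> + cscale (of_real t) B))" for t :: real
  define c4 where "c4 = cext4 u A (cconj A) B (cconj B)"
  have f_nonneg: "0 \<le> Re (f t)" for t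
  proof -
    have "\<xi> + cscale (of_real t) A \<in> T10 J" "\<eta> + cscale (of_real t) B \<in> T10 J"
      using T10_add[OF cs] T10_cscale[OF cs] \<xi> \<eta> A B by blast+
    then show ?thesis
      using nonneg by (auto simp: nonneg_tensor_def f_def less_eq_complex_def)
  qed
  text \<open>The odd powers of \<open>t\<close> cancel, and the constant term vanishes at the zero \<open>(\<xi>, \<eta>)\<close>.\<close>
  have "f t + f (- t) = 2 * (of_real t)\<^sup>2 * ?c2 + 2 * (of_real t) ^ 4 * c4" for t
    unfolding f_def c4_def
    by (simp add: cext4_add[OF curv] cext4_cscale[OF curv] cconj_add cconj_cscale vanishing)
      (simp add: algebra_simps power2_eq_square power4_eq_xxxx)
  then have "Re (f t + f (- t)) = (2 * Re ?c2) * t\<^sup>2 + (2 * Re c4) * t ^ 4" for t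
    by (simp add: power2_eq_square power4_eq_xxxx)
  then have "0 \<le> (2 * Re ?c2) * t\<^sup>2 + (2 * Re c4) * t ^ 4" for t
    using f_nonneg[of t] f_nonneg[of "- t"] by (metis add_nonneg_nonneg plus_complex.sel(1))
  from nonneg_quartic_imp_quadratic_coeff_nonneg[OF this] show ?thesis
    by simp
qed

lemma hermitian_second_variation_nonneg:
  assumes A: "A \<in> T10 J" and B: "B \<in> T10 J"
  shows "0 \<le> Re (cext4 u A (cconj A) \<eta> (cconj \<eta>) + cext4 u \<xi> (cconj \<xi>) B (cconj B)
     + cext4 u A (cconj \<xi>) B (cconj \<eta>) + cext4 u \<xi> (cconj A) \<eta> (cconj B))"
proof -
  text \<open>Adding the second variation in the directions \<open>(-i A, i B)\<close> cancels the other two terms.\<close>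
  show ?thesis
    using second_variation_nonneg[OF A B]
      second_variation_nonneg[OF T10_cscale[OF cs A, of "- \<i>"] T10_cscale[OF cs B, of \<i>]]
    by (simp add: cext4_cscale[OF curv] cconj_cscale algebra_simps)
qed

lemma quad_form_variation_matrix:
  assumes A: "A = (\<Sum>i<n. cscale (cnj (z (True, i))) (e i))"
    and B: "B = (\<Sum>i<n. cscale (z (False, i)) (e i))"
  shows "quad_form (UNIV \<times> {..<n}) (variation_matrix u \<xi> \<eta> e) z =
    cext4 u A (cconj A) \<eta> (cconj \<eta>) + cext4 u \<xi> (cconj \<xi>) B (cconj B)
     + cext4 u A (cconj \<xi>) B (cconj \<eta>) + cext4 u \<xi> (cconj A) \<eta> (cconj B)"
proof -
  define M where "M = variation_matrix u \<xi> \<eta> e"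
  have split: "(\<Sum>a\<in>UNIV \<times> {..<n}. f a) = (\<Sum>i<n. f (True, i)) + (\<Sum>i<n. f (False, i))"
    for f :: "bool \<times> nat \<Rightarrow> complex"
    using sum.cartesian_product[of "\<lambda>b i. f (b, i)" "{..<n}" UNIV] by (simp add: UNIV_bool add.commute)
  have "quad_form (UNIV \<times> {..<n}) M z =
       (\<Sum>i<n. \<Sum>k<n. cnj (z (True, i)) * M (True, i) (True, k) * z (True, k))
     + (\<Sum>i<n. \<Sum>k<n. cnj (z (False, i)) * M (False, i) (False, k) * z (False, k))
     + (\<Sum>i<n. \<Sum>k<n. cnj (z (True, i)) * M (True, i) (False, k) * z (False, k))
     + (\<Sum>i<n. \<Sum>k<n. cnj (z (False, i)) * M (False, i) (True, k) * z (True, k))"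
    unfolding quad_form_def split by (simp add: sum.distrib algebra_simps)
  moreover have
    "cext4 u A (cconj A) \<eta> (cconj \<eta>) = (\<Sum>i<n. \<Sum>k<n. cnj (z (True, i)) * M (True, i) (True, k) * z (True, k))"
    "cext4 u \<xi> (cconj \<xi>) B (cconj B) = (\<Sum>i<n. \<Sum>k<n. cnj (z (False, i)) * M (False, i) (False, k) * z (False, k))"
    "cext4 u A (cconj \<xi>) B (cconj \<eta>) = (\<Sum>i<n. \<Sum>k<n. cnj (z (True, i)) * M (True, i) (False, k) * z (False, k))"
    "cext4 u \<xi> (cconj A) \<eta> (cconj B) = (\<Sum>i<n. \<Sum>k<n. cnj (z (False, i)) * M (False, i) (True, k) * z (True, k))"
    unfolding A B M_def variation_matrix_def
    by (simp_all add: cext4_sum[OF curv] cext4_cscale[OF curv] cconj_sum cconj_cscale sum_distrib_left mult_ac;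
        subst sum.swap; simp add: mult_ac)+
  ultimately show ?thesis
    by (simp add: M_def)
qed

lemma psd_on_variation_matrix:
  assumes e: "\<And>i. i < n \<Longrightarrow> e i \<in> T10 J"
  shows "psd_on (UNIV \<times> {..<n}) (variation_matrix u \<xi> \<eta> e)"
  unfolding psd_on_def
proof (intro conjI allI ballI)
  fix a c :: "bool \<times> nat"
  show "variation_matrix u \<xi> \<eta> e c a = cnj (variation_matrix u \<xi> \<eta> e a c)"
    by (cases a; cases c; cases "fst a"; cases "fst c")
      (auto simp: variation_matrix_def cnj_cext4[OF curv] intro: cext4_swap_pairs[OF curv])
next
  fix z
  let ?A = "\<Sum>i<n. cscale (cnj (z (True, i))) (e i)" and ?B = "\<Sum>i<n. cscale (z (False, i)) (e i)"
  have "?A \<in> T10 J" "?B \<in> T10 J"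
    using e by (auto intro!: T10_sum[OF cs] T10_cscale[OF cs])
  then show "0 \<le> Re (quad_form (UNIV \<times> {..<n}) (variation_matrix u \<xi> \<eta> e) z)"
    using hermitian_second_variation_nonneg quad_form_variation_matrix[OF refl refl] by simp
qed

end

theorem corollary4p4:
  fixes J :: "'v::euclidean_space \<Rightarrow> 'v"
    and g :: "'v \<Rightarrow> 'v \<Rightarrow> real"
    and u :: "'v \<Rightarrow> 'v \<Rightarrow> 'v \<Rightarrow> 'v \<Rightarrow> real"
    and \<xi> \<eta> :: "'v cvec"
    and n :: nat and e :: "nat \<Rightarrow> 'v cvec"
  assumes "complex_structure J"
    and "hermitian_metric J g"
    and "curvature_type J u"
    and "nonneg_tensor J u"
    and "\<xi> \<in> T10 J" and "\<eta> \<in> T10 J"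
    and "cext4 u \<xi> (cconj \<xi>) \<eta> (cconj \<eta>) = 0"
    and "orthonormal_basis_T10 J g n e"
  shows "(\<Sum>i<n. \<Sum>j<n.
            cext4 u \<xi> (cconj \<xi>) (e i) (cconj (e j)) * cext4 u (e j) (cconj (e i)) \<eta> (cconj \<eta>)
          - cext4 u \<xi> (cconj (e i)) \<eta> (cconj (e j)) * cext4 u (e j) (cconj \<xi>) (e i) (cconj \<eta>)) \<ge> 0"
proof -
  have "e i \<in> T10 J" if "i < n" for i
    using assms(8) that unfolding orthonormal_basis_T10_def by blast
  then have "psd_on (UNIV \<times> {..<n}) (variation_matrix u \<xi> \<eta> e)"
    by (rule psd_on_variation_matrix[OF assms(1,3-7)])
  from psd_on_block_exchange_nonneg[OF this] show ?thesis
    by (simp add: variation_matrix_def)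
qed

end
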